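(* Let $n\ge 2$ and consider the asynchronous $(n,k)$ game on the complete graph with agent set $[n]=\{1,\dots,n\}$ consisting of $n_r$ rejectors and $n-n_r$ random followers, where the threshold satisfies $k\le n-n_r$. Then the probability that a decision is made in finite time, i.e. $P\big(\exists\, t\ge 0:\ \sum_{i\in[n]}x_i(t)\ge k\big)$, is at most $\dfrac{n-n_r}{2k}$.
   Context: Each agent $i\in[n]$ holds an opinion $x_i(t)\in\{0,1\}$ at time $t=0,1,2,\dots$. The social graph is complete: every agent's social neighbors are all the other $n-1$ agents. In the $(n,k)$ game a decision is made at time $t$ if $\sum_{i\in[n]}x_i(t)\ge k$. The game is asynchronous: at each time step a single agent, chosen uniformly at random from $[n]$ (independently of the past), updates its opinion, and all other opinions stay the same. A rejector holds opinion $0$ at all times. A random follower has initial opinion distributed as Bernoulli$(1/2)$ (independently across agents), and when it updates it adopts the current opinion of one of its social neighbors chosen uniformly at random. *)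

theory Defs
  imports "HOL-Probability.Probability"
begin

(* Agents are 0..n-1; opinion 1 is True, 0 is False. R is the set of rejectors. *)

definition init_pmf :: "nat \<Rightarrow> nat set \<Rightarrow> (nat \<Rightarrow> bool) pmf" where
  "init_pmf n R = Pi_pmf {..<n} False
      (\<lambda>i. if i \<in> R then return_pmf False else bernoulli_pmf (1/2))"

(* one asynchronous step: a uniformly random updating agent i and, independently given i,
   a uniformly random social neighbour j (any other agent): uniform on ordered distinct pairs *)
definition step_pmf :: "nat \<Rightarrow> (nat \<times> nat) pmf" where
  "step_pmf n = pmf_of_set {(i, j). i < n \<and> j < n \<and> j \<noteq> i}"

definition update :: "nat set \<Rightarrow> (nat \<Rightarrow> bool) \<Rightarrow> nat \<times> nat \<Rightarrow> (nat \<Rightarrow> bool)" where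
  "update R x s = (let (i, j) = s in if i \<in> R then x(i := False) else x(i := x j))"

primrec traj :: "nat set \<Rightarrow> (nat \<Rightarrow> bool) \<Rightarrow> (nat \<times> nat) stream \<Rightarrow> nat \<Rightarrow> (nat \<Rightarrow> bool)" where
  "traj R x0 \<omega> 0 = x0"
| "traj R x0 \<omega> (Suc t) = update R (traj R x0 \<omega> t) (\<omega> !! t)"

definition ones :: "nat \<Rightarrow> (nat \<Rightarrow> bool) \<Rightarrow> nat" where
  "ones n x = (\<Sum>i<n. if x i then 1 else 0)"

definition game_space :: "nat \<Rightarrow> nat set \<Rightarrow> ((nat \<Rightarrow> bool) \<times> (nat \<times> nat) stream) measure" where
  "game_space n R = measure_pmf (init_pmf n R) \<Otimes>\<^sub>M stream_space (measure_pmf (step_pmf n))"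

definition decision_event :: "nat \<Rightarrow> nat set \<Rightarrow> nat \<Rightarrow> ((nat \<Rightarrow> bool) \<times> (nat \<times> nat) stream) set" where
  "decision_event n R k = {(x0, \<omega>) \<in> space (game_space n R). \<exists>t. ones n (traj R x0 \<omega> t) \<ge> k}"

end

(* The number of agents holding opinion 1 is a nonnegative supermartingale: the updating pair
   (i, j) is uniform over ordered pairs of distinct agents, so by the symmetry (i, j) <-> (j, i) a
   follower gains x_j and loses x_i with the same expectation, while a rejector can only lose.
   By the maximal inequality for nonnegative supermartingales, proved here by first-step analysis
   on the i.i.d. stream of steps, the probability that the count ever reaches k is at most its
   initial expectation (n - nr)/2 divided by k. *)

theory Submission
  imports Defs
begin

primrec walk :: "('a \<Rightarrow> 's \<Rightarrow> 'a) \<Rightarrow> 'a \<Rightarrow> 's stream \<Rightarrow> nat \<Rightarrow> 'a" where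
  "walk f x \<omega> 0 = x"
| "walk f x \<omega> (Suc t) = f (walk f x \<omega> t) (\<omega> !! t)"

lemma walk_Cons: "walk f x (s ## \<omega>) (Suc t) = walk f (f x s) \<omega> t"
  by (induction t) auto

lemma walk_eq_fold_stake: "walk f x \<omega> t = fold (\<lambda>s y. f y s) (stake t \<omega>) x"
  by (induction t) (simp_all del: stake.simps add: stake_Suc stake.simps(1))

lemma space_stream_space_pmf [simp]: "space (stream_space (measure_pmf p)) = UNIV"
  by (simp add: space_stream_space)

lemma prob_space_stream_space_pmf: "prob_space (stream_space (measure_pmf p))"
  by (rule prob_space.prob_space_stream_space) (rule measure_pmf.prob_space_axioms)

lemma measurable_stream_space_pmf_eq:
  "N \<rightarrow>\<^sub>M stream_space (measure_pmf p) = N \<rightarrow>\<^sub>M stream_space (count_space UNIV)"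
  by (intro measurable_cong_sets sets_stream_space_cong) simp_all

lemma measurable_walk:
  fixes f :: "'a \<Rightarrow> 's::countable \<Rightarrow> 'a"
  assumes "x \<in> M \<rightarrow>\<^sub>M count_space UNIV" "\<omega> \<in> M \<rightarrow>\<^sub>M stream_space (measure_pmf p)"
  shows "(\<lambda>m. walk f (x m) (\<omega> m) t) \<in> M \<rightarrow>\<^sub>M count_space UNIV"
proof -
  have fold: "(\<lambda>m. fold (\<lambda>s y. f y s) l (x m)) \<in> M \<rightarrow>\<^sub>M count_space UNIV" for l
    using assms(1) measurable_count_space by (rule measurable_compose)
  have stake: "(\<lambda>m. stake t (\<omega> m)) \<in> M \<rightarrow>\<^sub>M count_space UNIV"
    using assms(2)[unfolded measurable_stream_space_pmf_eq] measurable_stake by (rule measurable_compose)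
  have "(\<lambda>m. fold (\<lambda>s y. f y s) (stake t (\<omega> m)) (x m)) \<in> M \<rightarrow>\<^sub>M count_space UNIV"
    by (rule measurable_compose_countable'[where f = "\<lambda>l m. fold (\<lambda>s y. f y s) l (x m)"
          and g = "\<lambda>m. stake t (\<omega> m)" and I = UNIV]) (use fold stake in auto)
  then show ?thesis
    by (simp add: walk_eq_fold_stake)
qed

lemma sets_walk_reaches_within:
  fixes f :: "'a \<Rightarrow> 's::countable \<Rightarrow> 'a"
  assumes "x \<in> M \<rightarrow>\<^sub>M count_space UNIV" "\<omega> \<in> M \<rightarrow>\<^sub>M stream_space (measure_pmf p)"
  shows "{m \<in> space M. \<exists>t\<le>T. P (walk f (x m) (\<omega> m) t)} \<in> sets M"
proof -
  have "{m \<in> space M. \<exists>t\<le>T. P (walk f (x m) (\<omega> m) t)}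
      = (\<Union>t\<in>{..T}. (\<lambda>m. walk f (x m) (\<omega> m) t) -` {y. P y} \<inter> space M)"
    by auto
  also have "\<dots> \<in> sets M"
    by (intro sets.finite_UN finite_atMost measurable_sets[OF measurable_walk[OF assms]]) simp
  finally show ?thesis .
qed

lemma sets_walk_reaches_within_stream_space:
  fixes f :: "'a \<Rightarrow> 's::countable \<Rightarrow> 'a"
  shows "{\<omega>. \<exists>t\<le>T. P (walk f x \<omega> t)} \<in> sets (stream_space (measure_pmf p))"
  using sets_walk_reaches_within[where x = "\<lambda>_. x" and \<omega> = "\<lambda>\<omega>. \<omega>" and M = "stream_space (measure_pmf p)"
      and f = f and T = T and P = P]
  by simp

lemma sets_walk_reaches_within_pair:
  fixes f :: "'a \<Rightarrow> 's::countable \<Rightarrow> 'a"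
  shows "{(x, \<omega>) \<in> space (measure_pmf q \<Otimes>\<^sub>M stream_space (measure_pmf p)). \<exists>t\<le>T. P (walk f x \<omega> t)}
    \<in> sets (measure_pmf q \<Otimes>\<^sub>M stream_space (measure_pmf p))"
proof -
  have "{(x, \<omega>) \<in> space (measure_pmf q \<Otimes>\<^sub>M stream_space (measure_pmf p)). \<exists>t\<le>T. P (walk f x \<omega> t)}
      = {m \<in> space (measure_pmf q \<Otimes>\<^sub>M stream_space (measure_pmf p)). \<exists>t\<le>T. P (walk f (fst m) (snd m) t)}"
    by auto
  also have "\<dots> \<in> sets (measure_pmf q \<Otimes>\<^sub>M stream_space (measure_pmf p))"
    using measurable_fst[of "measure_pmf q", unfolded measurable_pmf_measure2] measurable_snd
    by (rule sets_walk_reaches_within)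
  finally show ?thesis .
qed

lemma sets_walk_reaches_pair:
  fixes f :: "'a \<Rightarrow> 's::countable \<Rightarrow> 'a"
  shows "{(x, \<omega>) \<in> space (measure_pmf q \<Otimes>\<^sub>M stream_space (measure_pmf p)). \<exists>t. P (walk f x \<omega> t)}
    \<in> sets (measure_pmf q \<Otimes>\<^sub>M stream_space (measure_pmf p))"
proof -
  have "{(x, \<omega>) \<in> space (measure_pmf q \<Otimes>\<^sub>M stream_space (measure_pmf p)). \<exists>t. P (walk f x \<omega> t)}
      = (\<Union>T. {(x, \<omega>) \<in> space (measure_pmf q \<Otimes>\<^sub>M stream_space (measure_pmf p)). \<exists>t\<le>T. P (walk f x \<omega> t)})"
    by auto
  also have "\<dots> \<in> sets (measure_pmf q \<Otimes>\<^sub>M stream_space (measure_pmf p))"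
    using sets_walk_reaches_within_pair by blast
  finally show ?thesis .
qed

lemma emeasure_walk_reaches_within_le:
  fixes f :: "'a \<Rightarrow> 's::countable \<Rightarrow> 'a" and p :: "'s pmf" and V :: "'a \<Rightarrow> ennreal"
  assumes superharmonic: "\<And>x. (\<integral>\<^sup>+s. V (f x s) \<partial>p) \<le> V x"
  shows "c * emeasure (stream_space (measure_pmf p)) {\<omega>. \<exists>t\<le>T. c \<le> V (walk f x \<omega> t)} \<le> V x"
proof -
  let ?S = "stream_space (measure_pmf p)"
  have saturated: "c * emeasure ?S A \<le> V x" if "c \<le> V x" for A x
  proof -
    have "c * emeasure ?S A \<le> c * 1"
      using prob_space.emeasure_le_1[OF prob_space_stream_space_pmf] by (rule mult_left_mono) simp
    also have "\<dots> \<le> V x"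
      using that by simp
    finally show ?thesis .
  qed
  have reach_sets: "{\<omega>. \<exists>t\<le>T. c \<le> V (walk f y \<omega> t)} \<in> sets ?S" for T y
    by (rule sets_walk_reaches_within_stream_space)
  show ?thesis
  proof (induction T arbitrary: x)
    case 0
    show ?case
      by (cases "c \<le> V x") (simp_all add: saturated)
  next
    case (Suc T)
    show ?case
    proof (cases "c \<le> V x")
      case True
      then show ?thesis
        by (rule saturated)
    next
      case False
      let ?A = "{\<omega>. \<exists>t\<le>Suc T. c \<le> V (walk f x \<omega> t)}"
      let ?B = "\<lambda>y. {\<omega>. \<exists>t\<le>T. c \<le> V (walk f y \<omega> t)}"
      have "s ## \<omega> \<in> ?A \<longleftrightarrow> \<omega> \<in> ?B (f x s)" for s \<omega>
      proof
        assume "s ## \<omega> \<in> ?A"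
        then obtain t where "t \<le> Suc T" "c \<le> V (walk f x (s ## \<omega>) t)"
          by blast
        moreover from this False obtain t' where "t = Suc t'"
          by (cases t) auto
        ultimately show "\<omega> \<in> ?B (f x s)"
          by (auto simp: walk_Cons simp del: walk.simps(2))
      next
        assume "\<omega> \<in> ?B (f x s)"
        then obtain t where "t \<le> T" "c \<le> V (walk f (f x s) \<omega> t)"
          by blast
        then show "s ## \<omega> \<in> ?A"
          by (auto simp: walk_Cons[symmetric] simp del: walk.simps(2) intro!: exI[of _ "Suc t"])
      qed
      then have shift: "indicator ?A (s ## \<omega>) = (indicator (?B (f x s)) \<omega> :: ennreal)" for s \<omega>
        by (simp only: indicator_def)
      have "c * emeasure ?S ?A = c * (\<integral>\<^sup>+\<omega>. indicator ?A \<omega> \<partial>?S)"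
        by (simp add: nn_integral_indicator reach_sets)
      also have "\<dots> = c * (\<integral>\<^sup>+s. (\<integral>\<^sup>+\<omega>. indicator ?A (s ## \<omega>) \<partial>?S) \<partial>p)"
        using prob_space.nn_integral_stream_space[OF measure_pmf.prob_space_axioms
            borel_measurable_indicator[OF reach_sets]] by simp
      also have "\<dots> = (\<integral>\<^sup>+s. c * emeasure ?S (?B (f x s)) \<partial>p)"
        by (simp add: shift nn_integral_indicator nn_integral_cmult reach_sets)
      also have "\<dots> \<le> (\<integral>\<^sup>+s. V (f x s) \<partial>p)"
        by (intro nn_integral_mono Suc.IH)
      also have "\<dots> \<le> V x"
        by (rule superharmonic)
      finally show ?thesis .
    qed
  qed
qed

lemma emeasure_walk_reaches_le:
  fixes f :: "'a \<Rightarrow> 's::countable \<Rightarrow> 'a" and p :: "'s pmf" and q :: "'a pmf" and V :: "'a \<Rightarrow> ennreal"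
  assumes superharmonic: "\<And>x. (\<integral>\<^sup>+s. V (f x s) \<partial>p) \<le> V x"
  shows "c * emeasure (measure_pmf q \<Otimes>\<^sub>M stream_space (measure_pmf p))
      {(x, \<omega>) \<in> space (measure_pmf q \<Otimes>\<^sub>M stream_space (measure_pmf p)). \<exists>t. c \<le> V (walk f x \<omega> t)}
    \<le> (\<integral>\<^sup>+x. V x \<partial>q)"
proof -
  let ?S = "stream_space (measure_pmf p)"
  let ?M = "measure_pmf q \<Otimes>\<^sub>M ?S"
  define H where "H T = {(x, \<omega>) \<in> space ?M. \<exists>t\<le>T. c \<le> V (walk f x \<omega> t)}" for T
  have H_sets: "H T \<in> sets ?M" for T
    unfolding H_def by (rule sets_walk_reaches_within_pair)
  have event: "{(x, \<omega>) \<in> space ?M. \<exists>t. c \<le> V (walk f x \<omega> t)} = (\<Union>T. H T)"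
    by (auto simp: H_def)
  have "incseq H"
    by (auto simp: incseq_def H_def intro: order.trans)
  have H_le: "c * emeasure ?M (H T) \<le> (\<integral>\<^sup>+x. V x \<partial>q)" for T
  proof -
    interpret S: sigma_finite_measure ?S
      using prob_space_stream_space_pmf by (rule prob_space_imp_sigma_finite)
    have "c * emeasure ?M (H T) = c * (\<integral>\<^sup>+x. emeasure ?S (Pair x -` H T) \<partial>q)"
      using H_sets by (simp add: S.emeasure_pair_measure_alt)
    also have "\<dots> = (\<integral>\<^sup>+x. c * emeasure ?S {\<omega>. \<exists>t\<le>T. c \<le> V (walk f x \<omega> t)} \<partial>q)"
      by (simp add: H_def nn_integral_cmult space_pair_measure)
    also have "\<dots> \<le> (\<integral>\<^sup>+x. V x \<partial>q)"
      using superharmonic by (intro nn_integral_mono emeasure_walk_reaches_within_le)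
    finally show ?thesis .
  qed
  have "c * emeasure ?M (\<Union>T. H T) = (SUP T. c * emeasure ?M (H T))"
    using H_sets \<open>incseq H\<close> by (simp add: SUP_emeasure_incseq[symmetric] SUP_mult_left_ennreal image_subset_iff)
  also have "\<dots> \<le> (\<integral>\<^sup>+x. V x \<partial>q)"
    using H_le by (rule SUP_least)
  finally show ?thesis
    unfolding event .
qed

lemma (in finite_measure) measure_le_divide_of_emeasure:
  assumes "ennreal c * emeasure M A \<le> ennreal b" "0 < c" "0 \<le> b"
  shows "measure M A \<le> b / c"
proof -
  have "ennreal (c * measure M A) \<le> ennreal b"
    using assms(1,2) by (simp add: emeasure_eq_measure ennreal_mult)
  then have "c * measure M A \<le> b"
    using assms(3) by (simp add: ennreal_le_iff)
  then show ?thesis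
    using assms(2) by (simp add: pos_le_divide_eq mult.commute)
qed

lemma traj_eq_walk: "traj R x \<omega> t = walk (update R) x \<omega> t"
  by (induction t) auto

definition distinct_pairs :: "nat \<Rightarrow> (nat \<times> nat) set" where
  "distinct_pairs n = {(i, j). i < n \<and> j < n \<and> j \<noteq> i}"

lemma step_pmf_eq: "step_pmf n = pmf_of_set (distinct_pairs n)"
  by (simp add: step_pmf_def distinct_pairs_def)

lemma finite_distinct_pairs: "finite (distinct_pairs n)"
  by (rule finite_subset[of _ "{..<n} \<times> {..<n}"]) (auto simp: distinct_pairs_def)

lemma distinct_pairs_nonempty:
  assumes "2 \<le> n"
  shows "distinct_pairs n \<noteq> {}"
proof -
  have "(1, 0) \<in> distinct_pairs n"
    using assms by (simp add: distinct_pairs_def)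
  then show ?thesis
    by blast
qed

lemma of_nat_ones: "of_nat (ones n x) = (\<Sum>i<n. of_bool (x i))"
  unfolding ones_def of_nat_sum by (intro sum.cong) auto

lemma ones_fun_upd:
  assumes "i < n"
  shows "ones n (x(i := b)) + of_bool (x i) = ones n x + of_bool b"
proof -
  have split: "ones n y = of_bool (y i) + (\<Sum>l\<in>{..<n} - {i}. of_bool (y l))" for y
    unfolding ones_def of_bool_def[symmetric] using assms by (simp only: sum.remove[OF finite_lessThan] lessThan_iff)
  have "(\<Sum>l\<in>{..<n} - {i}. of_bool ((x(i := b)) l)) = (\<Sum>l\<in>{..<n} - {i}. of_bool (x l) :: nat)"
    by (rule sum.cong) auto
  then show ?thesis
    using split[of x] split[of "x(i := b)", unfolded fun_upd_same] by linarith
qed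

lemma ones_update_le:
  assumes "i < n"
  shows "ones n (update R x (i, j)) + of_bool (x i) \<le> ones n x + of_bool (x j)"
proof (cases "i \<in> R")
  case True
  then show ?thesis
    using ones_fun_upd[OF assms, of x False] by (simp add: update_def)
next
  case False
  then show ?thesis
    using ones_fun_upd[OF assms, of x "x j"] by (simp add: update_def)
qed

lemma sum_ones_update_le:
  "(\<Sum>s\<in>distinct_pairs n. ones n (update R x s)) \<le> card (distinct_pairs n) * ones n x"
proof -
  let ?P = "distinct_pairs n"
  have swap: "(\<Sum>s\<in>?P. of_bool (x (fst s))) = (\<Sum>s\<in>?P. of_bool (x (snd s)) :: nat)"
    by (rule sum.reindex_bij_witness[of _ prod.swap prod.swap]) (auto simp: distinct_pairs_def)
  have "(\<Sum>s\<in>?P. ones n (update R x s) + of_bool (x (fst s))) \<le> (\<Sum>s\<in>?P. ones n x + of_bool (x (snd s)))"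
  proof (rule sum_mono)
    fix s
    assume "s \<in> ?P"
    then obtain i j where "s = (i, j)" "i < n"
      by (auto simp: distinct_pairs_def)
    then show "ones n (update R x s) + of_bool (x (fst s)) \<le> ones n x + of_bool (x (snd s))"
      using ones_update_le[of i n R x j] by simp
  qed
  then show ?thesis
    using swap by (simp add: sum.distrib)
qed

lemma nn_integral_ones_step_le:
  assumes "2 \<le> n"
  shows "(\<integral>\<^sup>+s. of_nat (ones n (update R x s)) \<partial>step_pmf n) \<le> of_nat (ones n x)"
proof -
  let ?P = "distinct_pairs n"
  have card: "card ?P \<noteq> 0"
    using finite_distinct_pairs distinct_pairs_nonempty[OF assms] by simp
  have "(\<integral>\<^sup>+s. of_nat (ones n (update R x s)) \<partial>step_pmf n)
      = of_nat (\<Sum>s\<in>?P. ones n (update R x s)) / of_nat (card ?P)"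
    using finite_distinct_pairs distinct_pairs_nonempty[OF assms]
    by (simp add: step_pmf_eq nn_integral_pmf_of_set)
  also have "\<dots> \<le> of_nat (card ?P * ones n x) / of_nat (card ?P)"
    by (intro divide_right_mono_ennreal iffD2[OF of_nat_le_iff] sum_ones_update_le)
  also have "\<dots> = of_nat (ones n x)"
    using card by (simp add: mult.commute mult_divide_eq_ennreal)
  finally show ?thesis .
qed

lemma nn_integral_ones_init:
  assumes "R \<subseteq> {..<n}"
  shows "(\<integral>\<^sup>+x. of_nat (ones n x) \<partial>init_pmf n R) = of_nat (n - card R) / 2"
proof -
  have component: "(\<integral>\<^sup>+x. of_bool (x i) \<partial>init_pmf n R) = (if i \<in> R then 0 else 1 / 2)"
    if "i < n" for i
  proof -
    have "(\<integral>\<^sup>+x. of_bool (x i) \<partial>init_pmf n R) = (\<integral>\<^sup>+b. of_bool b \<partial>map_pmf (\<lambda>x. x i) (init_pmf n R))"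
      by simp
    also have "map_pmf (\<lambda>x. x i) (init_pmf n R) = (if i \<in> R then return_pmf False else bernoulli_pmf (1 / 2))"
      unfolding init_pmf_def using that by (subst Pi_pmf_component) auto
    finally show ?thesis
      by (cases "i \<in> R") (simp_all add: divide_ennreal_def)
  qed
  have "(\<integral>\<^sup>+x. of_nat (ones n x) \<partial>init_pmf n R) = (\<Sum>i<n. \<integral>\<^sup>+x. of_bool (x i) \<partial>init_pmf n R)"
    unfolding of_nat_ones by (rule nn_integral_sum) simp
  also have "\<dots> = (\<Sum>i<n. if i \<in> R then 0 else 1 / 2)"
    by (rule sum.cong) (simp_all add: component)
  also have "\<dots> = (\<Sum>i\<in>{..<n} - R. 1 / 2)"
    by (rule sum.mono_neutral_cong_right) auto
  also have "\<dots> = of_nat (card ({..<n} - R)) / 2"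
    by (simp add: ennreal_times_divide)
  also have "card ({..<n} - R) = n - card R"
    using assms by (simp add: card_Diff_subset finite_subset)
  finally show ?thesis .
qed

theorem theorem1:
  fixes n nr k :: nat and R :: "nat set"
  assumes "n \<ge> 2" and "R \<subseteq> {..<n}" and "card R = nr"
    and "1 \<le> k" and "k \<le> n - nr"
  shows "decision_event n R k \<in> sets (game_space n R) \<and>
         measure (game_space n R) (decision_event n R k) \<le> real (n - nr) / (2 * real k)"
proof -
  let ?G = "game_space n R"
  interpret G: prob_space ?G
    unfolding game_space_def
    by (rule prob_space_pair[OF measure_pmf.prob_space_axioms prob_space_stream_space_pmf])
  have event: "decision_event n R k
      = {(x, \<omega>) \<in> space ?G. \<exists>t. of_nat k \<le> (of_nat (ones n (walk (update R) x \<omega> t)) :: ennreal)}"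
    by (simp add: decision_event_def traj_eq_walk)
  have "of_nat k * emeasure ?G (decision_event n R k) \<le> (\<integral>\<^sup>+x. of_nat (ones n x) \<partial>init_pmf n R)"
    unfolding event game_space_def
    by (rule emeasure_walk_reaches_le[where V = "\<lambda>x. of_nat (ones n x)"])
      (rule nn_integral_ones_step_le[OF \<open>n \<ge> 2\<close>])
  also have "\<dots> = of_nat (n - nr) / 2"
    using nn_integral_ones_init[OF assms(2)] assms(3) by simp
  finally have "ennreal (real k) * emeasure ?G (decision_event n R k) \<le> ennreal (real (n - nr) / 2)"
    by (simp add: ennreal_of_nat_eq_real_of_nat ennreal_divide_numeral)
  then have "measure ?G (decision_event n R k) \<le> real (n - nr) / 2 / real k"
    using \<open>1 \<le> k\<close> by (intro G.measure_le_divide_of_emeasure) auto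
  moreover have "decision_event n R k \<in> sets ?G"
    unfolding event game_space_def by (rule sets_walk_reaches_pair)
  ultimately show ?thesis
    by simp
qed

end
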